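(* Let $K$ be a field of characteristic $\neq 2$ containing a square root $i$ of $-1$, and let $A\in K\setminus\{0\}$ be a non-zero constant. Then $$\#\{S(P): P \text{ a Markoff triple for } A,\ h(P)\le H\}\sim \tfrac14 H^2\qquad (H\to\infty).$$
   Context: For $A\in K[t]$ non-zero, consider solutions $(x,y,z)\in K[t]^3$ of $x^2+y^2+z^2=Axyz$. The degree of the zero polynomial is $-\infty$. The height of a solution $P=(x,y,z)$ is $h(P)=\max\{\deg x,\deg y,\deg z\}$, and its signature is $S(P)=(\deg x,\deg y,\deg z)$. A Markoff triple is a solution $P=(x,y,z)$ with $h(P)>0$ and $\deg x\le\deg y\le\deg z$. The count is of distinct signatures. *)

theory Defs
  imports "HOL-Computational_Algebra.Polynomial" "HOL-Library.Extended_Real" "HOL-Library.Landau_Symbols"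
begin

definition pdeg :: "'a::zero poly \<Rightarrow> ereal" where
  "pdeg p = (if p = 0 then -\<infinity> else ereal (real (degree p)))"

definition is_solution :: "'a::comm_ring_1 poly \<Rightarrow> 'a poly \<times> 'a poly \<times> 'a poly \<Rightarrow> bool" where
  "is_solution A P = (case P of (x, y, z) \<Rightarrow> x^2 + y^2 + z^2 = A * x * y * z)"

definition height :: "'a::zero poly \<times> 'a poly \<times> 'a poly \<Rightarrow> ereal" where
  "height P = (case P of (x, y, z) \<Rightarrow> max (pdeg x) (max (pdeg y) (pdeg z)))"

definition signature :: "'a::zero poly \<times> 'a poly \<times> 'a poly \<Rightarrow> ereal \<times> ereal \<times> ereal" where
  "signature P = (case P of (x, y, z) \<Rightarrow> (pdeg x, pdeg y, pdeg z))"

definition markoff_triple :: "'a::comm_ring_1 poly \<Rightarrow> 'a poly \<times> 'a poly \<times> 'a poly \<Rightarrow> bool" where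
  "markoff_triple A P = (is_solution A P \<and> height P > 0 \<and>
     (case P of (x, y, z) \<Rightarrow> pdeg x \<le> pdeg y \<and> pdeg y \<le> pdeg z))"

definition markoff_sig_count :: "'a::comm_ring_1 poly \<Rightarrow> nat \<Rightarrow> nat" where
  "markoff_sig_count A H = card (signature ` {P. markoff_triple A P \<and> height P \<le> ereal (real H)})"

end

theory Submission
  imports Defs "HOL-Real_Asymp.Real_Asymp"
begin

text \<open>
  Comparing degrees in \<open>x\<^sup>2 + y\<^sup>2 + z\<^sup>2 = a x y z\<close> shows that a Markoff triple with
  \<open>x \<noteq> 0\<close> satisfies \<open>deg z = deg x + deg y\<close>, so apart from the \<open>O(H)\<close> signatures with
  \<open>x\<close> constant or zero, every signature is \<open>(m, n, m + n)\<close> with \<open>1 \<le> m \<le> n\<close> and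
  \<open>m + n \<le> H\<close>. Conversely each such \<open>(m, n)\<close> occurs: run the Euclidean algorithm
  backwards from \<open>x = t\<^sup>m\<close>, \<open>y = i t\<^sup>m\<close>, \<open>z = a x y\<close>, a solution because \<open>x\<^sup>2 + y\<^sup>2 = 0\<close>, using the
  Vieta involution \<open>y \<mapsto> a x z - y\<close>. Hence the count is the number of lattice points
  in a triangle of area \<open>H\<^sup>2/4\<close>, up to \<open>O(H)\<close>.
\<close>

lemma is_solution_swap: "is_solution A (x, y, z) \<longleftrightarrow> is_solution A (y, x, z)"
  by (simp add: is_solution_def algebra_simps)

lemma is_solution_vieta:
  assumes "is_solution A (x, y, z)"
  shows "is_solution A (x, z, A * x * z - y)"
proof -
  have "x^2 + z^2 + (A * x * z - y)^2 - A * x * z * (A * x * z - y) = x^2 + y^2 + z^2 - A * x * y * z"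
    by (simp add: power2_eq_square algebra_simps)
  with assms show ?thesis
    by (simp add: is_solution_def)
qed

lemma degree_vieta:
  fixes x y z :: "'a::idom poly"
  assumes "a \<noteq> 0" "x \<noteq> 0" "z \<noteq> 0" "degree y < degree x + degree z"
  shows "degree ([:a:] * x * z - y) = degree x + degree z"
proof -
  have "degree ([:a:] * x * z) = degree x + degree z"
    using assms(1-3) by (simp add: degree_mult_eq)
  with assms(4) show ?thesis
    unfolding diff_conv_add_uminus by (subst degree_add_eq_left) auto
qed

lemma markoff_solution_exists:
  fixes a i :: "'a::idom"
  assumes i: "i * i = -1" and a: "a \<noteq> 0" and "1 \<le> m" "1 \<le> n"
  shows "\<exists>x y z. is_solution [:a:] (x, y, z) \<and> degree x = m \<and> degree y = n \<and> degree z = m + n"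
  using assms(3,4)
proof (induction "m + n" arbitrary: m n rule: less_induct)
  case less
  show ?case
  proof (cases "m = n")
    case True
    define x :: "'a poly" where "x = monom 1 m"
    define y where "y = smult i x"
    have "i \<noteq> 0" using i by auto
    then have deg: "degree x = m" "degree y = n" "x \<noteq> 0" "y \<noteq> 0"
      using True by (simp_all add: x_def y_def degree_monom_eq)
    have "x^2 + y^2 = 0"
      by (simp add: y_def power2_eq_square i mult.assoc[symmetric])
    then have "is_solution [:a:] (x, y, [:a:] * x * y)"
      by (simp add: is_solution_def power2_eq_square)
    moreover have "degree ([:a:] * x * y) = m + n"
      using deg a by (simp add: degree_mult_eq)
    ultimately show ?thesis
      using deg by blast
  next
    case False
    define l h where "l = min m n" and "h = max m n"
    have "l < h" "1 \<le> l" "1 \<le> h - l" "l + (h - l) < m + n" "l + h = m + n"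
      using False less.prems by (auto simp: l_def h_def)
    then obtain x y z where sol: "is_solution [:a:] (x, y, z)"
      and deg: "degree x = l" "degree y = h - l" "degree z = l + (h - l)"
      using less.hyps[of l "h - l"] by auto
    have "x \<noteq> 0" "z \<noteq> 0" "degree y < degree x + degree z"
      using deg \<open>1 \<le> l\<close> \<open>l < h\<close> by auto
    then have "degree ([:a:] * x * z - y) = degree x + degree z"
      by (rule degree_vieta[OF a])
    then have "degree ([:a:] * x * z - y) = m + n"
      using deg \<open>l < h\<close> \<open>l + h = m + n\<close> by simp
    moreover note is_solution_vieta[OF sol]
    ultimately show ?thesis
      using deg \<open>l < h\<close> is_solution_swap unfolding l_def h_def
      by (cases "m < n") (fastforce simp: add.commute)+
  qed
qed

lemma markoff_degree_sum:
  fixes x y z :: "'a::idom poly"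
  assumes sol: "is_solution [:a:] (x, y, z)" and "a \<noteq> 0" "x \<noteq> 0" "y \<noteq> 0" "z \<noteq> 0"
    and ord: "degree x \<le> degree y" "degree y \<le> degree z"
  shows "degree z = degree x + degree y"
proof -
  have eq: "x^2 + y^2 + z^2 = [:a:] * x * y * z"
    using sol by (simp add: is_solution_def)
  have rhs: "degree ([:a:] * x * y * z) = degree x + degree y + degree z"
    using assms(2-5) by (simp add: degree_mult_eq)
  have sq: "degree (x^2) = 2 * degree x" "degree (y^2) = 2 * degree y" "degree (z^2) = 2 * degree z"
    by (simp_all add: degree_power_eq assms(3-5))
  have xy: "degree (x^2 + y^2) \<le> 2 * degree y"
    using degree_add_le[of "x^2" "2 * degree y" "y^2"] sq ord by simp
  have "degree (x^2 + y^2 + z^2) \<le> 2 * degree z"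
    using degree_add_le[of "x^2 + y^2" "2 * degree z" "z^2"] xy sq ord by simp
  then have le: "degree x + degree y \<le> degree z"
    using eq rhs by simp
  show ?thesis
  proof (cases "degree y < degree z")
    case True
    then have "degree (x^2 + y^2 + z^2) = 2 * degree z"
      using xy sq by (simp add: degree_add_eq_right)
    then show ?thesis
      using eq rhs by simp
  next
    case False
    then show ?thesis
      using le ord by simp
  qed
qed

lemma markoff_zero_first:
  fixes y z :: "'a::idom poly"
  assumes "is_solution A (0, y, z)"
  shows "degree z = degree y" "z = 0 \<longleftrightarrow> y = 0"
proof -
  have sq: "z^2 = - (y^2)"
    using assms by (simp add: is_solution_def eq_neg_iff_add_eq_0 add.commute)
  show zero: "z = 0 \<longleftrightarrow> y = 0"
    using sq by auto
  have "degree (z^2) = degree (y^2)"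
    using sq by simp
  then show "degree z = degree y"
    using zero by (cases "y = 0") (simp_all add: degree_power_eq)
qed

definition sum_signature :: "nat \<times> nat \<Rightarrow> ereal \<times> ereal \<times> ereal" where
  "sum_signature = (\<lambda>(m, n). (ereal (real m), ereal (real n), ereal (real (m + n))))"

lemma markoff_signature_cases:
  fixes a :: "'a::idom"
  assumes "a \<noteq> 0" "markoff_triple [:a:] P"
  obtains m n where "1 \<le> m" "m \<le> n" "signature P = sum_signature (m, n)"
      "height P = ereal (real (m + n))"
    | e d where "e \<in> {0, -\<infinity>}" "signature P = (e, ereal (real d), ereal (real d))"
      "height P = ereal (real d)"
proof -
  obtain x y z where P: "P = (x, y, z)"
    by (cases P) auto
  have sol: "is_solution [:a:] (x, y, z)" and pos: "height P > 0"
    and ord: "pdeg x \<le> pdeg y" "pdeg y \<le> pdeg z"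
    using assms(2) by (simp_all add: markoff_triple_def P)
  consider "x = 0" | "x \<noteq> 0" "degree x = 0" | "x \<noteq> 0" "1 \<le> degree x"
    by linarith
  then show ?thesis
  proof cases
    case 1
    have "y \<noteq> 0"
      using markoff_zero_first(2)[of _ y z] sol pos 1 by (auto simp: P height_def pdeg_def)
    then show ?thesis
      using that(2)[of "-\<infinity>" "degree y"] markoff_zero_first[of _ y z] sol 1
      by (simp add: P signature_def height_def pdeg_def)
  next
    case 2
    have "y \<noteq> 0" "z \<noteq> 0"
      using ord 2 by (auto simp: pdeg_def split: if_splits)
    moreover have "degree y \<le> degree z"
      using ord calculation 2 by (simp add: pdeg_def)
    ultimately have "degree z = degree y"
      using markoff_degree_sum[OF sol assms(1)] 2 by simp
    then show ?thesis
      using that(2)[of 0 "degree y"] 2 \<open>y \<noteq> 0\<close> \<open>z \<noteq> 0\<close>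
      by (simp add: P signature_def height_def pdeg_def zero_ereal_def)
  next
    case 3
    have nz: "y \<noteq> 0" "z \<noteq> 0"
      using ord 3 by (auto simp: pdeg_def split: if_splits)
    have dord: "degree x \<le> degree y" "degree y \<le> degree z"
      using ord 3 nz by (simp_all add: pdeg_def)
    have "degree z = degree x + degree y"
      using markoff_degree_sum[OF sol assms(1) 3(1) nz dord] .
    then show ?thesis
      using that(1)[of "degree x" "degree y"] 3 nz dord
      by (simp add: P signature_def height_def pdeg_def sum_signature_def)
  qed
qed

definition degree_pairs :: "nat \<Rightarrow> (nat \<times> nat) set" where
  "degree_pairs H = {(m, n). 1 \<le> m \<and> m \<le> n \<and> m + n \<le> H}"

lemma finite_degree_pairs: "finite (degree_pairs H)"
  by (rule finite_subset[of _ "{..H} \<times> {..H}"]) (auto simp: degree_pairs_def)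

lemma card_degree_pairs_Suc:
  "card (degree_pairs (Suc H)) = card (degree_pairs H) + Suc H div 2"
proof -
  let ?new = "(\<lambda>m. (m, Suc H - m)) ` {1..Suc H div 2}"
  have "degree_pairs (Suc H) = degree_pairs H \<union> ?new"
    by (auto simp: degree_pairs_def image_iff)
  moreover have "degree_pairs H \<inter> ?new = {}"
    by (auto simp: degree_pairs_def)
  moreover have "card ?new = Suc H div 2"
    by (subst card_image) (auto simp: inj_on_def)
  ultimately show ?thesis
    by (simp add: card_Un_disjoint finite_degree_pairs)
qed

lemma card_degree_pairs_bounds:
  "H^2 \<le> 4 * card (degree_pairs H) + 2 * H \<and> 4 * card (degree_pairs H) \<le> H^2 + 2 * H"
proof (induction H)
  case 0
  have "degree_pairs 0 = {}"
    by (auto simp: degree_pairs_def)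
  then show ?case
    by simp
next
  case (Suc H)
  have "(Suc H)^2 = H^2 + 2 * H + 1"
    by (simp add: power2_eq_square)
  moreover have "H \<le> 2 * (Suc H div 2)" "2 * (Suc H div 2) \<le> Suc H"
    by auto
  ultimately show ?case
    using Suc.IH by (simp add: card_degree_pairs_Suc) linarith
qed

lemma sum_signatures_realized:
  fixes a i :: "'a::idom"
  assumes "i * i = -1" "a \<noteq> 0"
  shows "sum_signature ` degree_pairs H
    \<subseteq> signature ` {P. markoff_triple [:a:] P \<and> height P \<le> ereal (real H)}"
proof
  fix s
  assume "s \<in> sum_signature ` degree_pairs H"
  then obtain m n where mn: "1 \<le> m" "m \<le> n" "m + n \<le> H" "s = sum_signature (m, n)"
    by (auto simp: degree_pairs_def)
  then obtain x y z where "is_solution [:a:] (x, y, z)"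
    and deg: "degree x = m" "degree y = n" "degree z = m + n"
    using markoff_solution_exists[OF assms, of m n] by (metis le_trans)
  moreover have "x \<noteq> 0" "y \<noteq> 0" "z \<noteq> 0"
    using deg mn by auto
  ultimately show "s \<in> signature ` {P. markoff_triple [:a:] P \<and> height P \<le> ereal (real H)}"
    using mn by (intro image_eqI[of _ _ "(x, y, z)"])
      (auto simp: markoff_triple_def height_def signature_def pdeg_def sum_signature_def)
qed

lemma markoff_signatures_subset:
  fixes a :: "'a::idom"
  assumes "a \<noteq> 0"
  shows "signature ` {P. markoff_triple [:a:] P \<and> height P \<le> ereal (real H)}
    \<subseteq> sum_signature ` degree_pairs H
      \<union> (\<lambda>(e, d). (e, ereal (real d), ereal (real d))) ` ({0, -\<infinity>} \<times> {..H})"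
proof
  fix s
  assume "s \<in> signature ` {P. markoff_triple [:a:] P \<and> height P \<le> ereal (real H)}"
  then obtain P where P: "markoff_triple [:a:] P" "height P \<le> ereal (real H)" "s = signature P"
    by blast
  from assms P(1) show "s \<in> sum_signature ` degree_pairs H
      \<union> (\<lambda>(e, d). (e, ereal (real d), ereal (real d))) ` ({0, -\<infinity>} \<times> {..H})"
  proof (cases rule: markoff_signature_cases)
    case (1 m n)
    then show ?thesis
      using P(2,3) by (auto simp: degree_pairs_def)
  next
    case (2 e d)
    then show ?thesis
      using P(2,3) by force
  qed
qed

lemma markoff_sig_count_bounds:
  fixes a i :: "'a::idom"
  assumes "i * i = -1" "a \<noteq> 0"
  shows "card (degree_pairs H) \<le> markoff_sig_count [:a:] H"
    "markoff_sig_count [:a:] H \<le> card (degree_pairs H) + 2 * (H + 1)"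
proof -
  define D where "D = (\<lambda>(e, d). (e, ereal (real d), ereal (real d))) ` ({0::ereal, -\<infinity>} \<times> {..H})"
  have "finite D" "card D \<le> 2 * (H + 1)"
    using card_image_le[of "{0::ereal, -\<infinity>} \<times> {..H}"]
    by (simp_all add: D_def card_cartesian_product mult_2)
  moreover have fin: "finite (sum_signature ` degree_pairs H \<union> D)"
    using calculation(1) finite_degree_pairs by simp
  moreover note upper = markoff_signatures_subset[OF assms(2), of H, folded D_def]
  ultimately show "markoff_sig_count [:a:] H \<le> card (degree_pairs H) + 2 * (H + 1)"
    unfolding markoff_sig_count_def
    using card_mono[OF fin upper] card_Un_le[of "sum_signature ` degree_pairs H" D]
      card_image_le[OF finite_degree_pairs[of H], of sum_signature] by linarith
  have "inj_on sum_signature (degree_pairs H)"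
    by (auto simp: inj_on_def sum_signature_def)
  with card_mono[OF finite_subset[OF upper fin] sum_signatures_realized[OF assms]]
  show "card (degree_pairs H) \<le> markoff_sig_count [:a:] H"
    by (simp add: card_image markoff_sig_count_def)
qed

lemma asymp_equiv_quarter_square:
  fixes c :: "nat \<Rightarrow> real"
  assumes "\<forall>\<^sub>F H in at_top. \<bar>c H - real H ^ 2 / 4\<bar> \<le> K * real H"
  shows "c \<sim>[at_top] (\<lambda>H. real H ^ 2 / 4)"
proof (rule smallo_imp_asymp_equiv)
  have "(\<lambda>H. c H - real H ^ 2 / 4) \<in> O(\<lambda>H. real H)"
    using assms by (intro bigoI[of _ K]) simp
  moreover have "(\<lambda>H::nat. real H) \<in> o(\<lambda>H. real H ^ 2 / 4)"
    by real_asymp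
  ultimately show "(\<lambda>H. c H - real H ^ 2 / 4) \<in> o(\<lambda>H. real H ^ 2 / 4)"
    by (rule landau_o.big_small_trans)
qed

theorem theorem1p4:
  fixes a :: "'a::field"
  assumes "(2::'a) \<noteq> 0"
    and "\<exists>i::'a. i * i = -1"
    and "a \<noteq> 0"
  shows "(\<lambda>H. real (markoff_sig_count [:a:] H)) \<sim>[at_top] (\<lambda>H. (real H)^2 / 4)"
proof (rule asymp_equiv_quarter_square[where K = 5])
  obtain i :: 'a where i: "i * i = -1"
    using assms(2) by blast
  show "\<forall>\<^sub>F H in at_top. \<bar>real (markoff_sig_count [:a:] H) - real H ^ 2 / 4\<bar> \<le> 5 * real H"
    using eventually_ge_at_top[of 1]
  proof eventually_elim
    case (elim H)
    have "real H ^ 2 \<le> 4 * real (card (degree_pairs H)) + 2 * real H"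
      "4 * real (card (degree_pairs H)) \<le> real H ^ 2 + 2 * real H"
      using card_degree_pairs_bounds[of H]
      by (simp_all add: of_nat_mono flip: of_nat_add of_nat_mult of_nat_power)
    moreover have "real (card (degree_pairs H)) \<le> real (markoff_sig_count [:a:] H)"
      "real (markoff_sig_count [:a:] H) \<le> real (card (degree_pairs H)) + 2 * real H + 2"
      using markoff_sig_count_bounds[OF i assms(3), of H] by simp_all
    ultimately show ?case
      using elim by (simp add: abs_le_iff)
  qed
qed

end
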